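(* An oriented Burling graph has no directed cycle.
   Context: Oriented graphs are finite, without loops, multiple arcs or pairs of opposite arcs. In a rooted tree $T$ with root $r$, each non-root vertex $v$ has a parent $p(v)$; children, leaves, ancestors and descendants are as usual. A branch is a sequence $v_1\dots v_k$ ($k\ge0$) with $v_i$ the parent of $v_{i+1}$; it starts at $v_1$. A Burling tree is a 4-tuple $(T,r,\ell,c)$: $T$ a rooted tree with root $r$; $\ell$ assigns to each non-leaf vertex $v$ one of its children $\ell(v)$ (the last-born of $v$); $c$ assigns to every vertex $v$ that is neither the root nor a last-born the vertex-set of a (possibly empty) branch starting at $\ell(p(v))$, and $c(v)=\emptyset$ if $v$ is the root or a last-born. The oriented graph fully derived from it has vertex-set $V(T)$ and an arc $uv$ iff $v\in c(u)$; an oriented graph is derived from the Burling tree if it is an induced subgraph of the fully derived one. An oriented Burling graph is an oriented graph derived from some Burling tree. *)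

theory Defs
  imports Main
begin

(* Oriented graph: finite vertex set V, arc relation A on V, no loops,
   no pairs of opposite arcs (multiple arcs impossible with a relation). *)
definition oriented_graph :: "'a set \<Rightarrow> ('a \<times> 'a) set \<Rightarrow> bool" where
  "oriented_graph V A \<longleftrightarrow> finite V \<and> A \<subseteq> V \<times> V
     \<and> (\<forall>v. (v, v) \<notin> A) \<and> (\<forall>u v. (u, v) \<in> A \<longrightarrow> (v, u) \<notin> A)"

(* Rooted tree on the finite vertex set T with root r, given by a parent
   function p (p r is irrelevant): every non-root vertex has its parent in T,
   and every vertex reaches the root by iterating the parent map. *)
definition rooted_tree :: "'a set \<Rightarrow> 'a \<Rightarrow> ('a \<Rightarrow> 'a) \<Rightarrow> bool" where
  "rooted_tree T r p \<longleftrightarrow> finite T \<and> r \<in> T \<and> (\<forall>v\<in>T - {r}. p v \<in> T)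
     \<and> (\<forall>v\<in>T. \<exists>n. (p ^^ n) v = r)"

definition children :: "'a set \<Rightarrow> 'a \<Rightarrow> ('a \<Rightarrow> 'a) \<Rightarrow> 'a \<Rightarrow> 'a set" where
  "children T r p v = {u \<in> T - {r}. p u = v}"

definition is_branch :: "'a set \<Rightarrow> 'a \<Rightarrow> ('a \<Rightarrow> 'a) \<Rightarrow> 'a list \<Rightarrow> bool" where
  "is_branch T r p xs \<longleftrightarrow> set xs \<subseteq> T
     \<and> (\<forall>i. Suc i < length xs \<longrightarrow> xs ! Suc i \<noteq> r \<and> p (xs ! Suc i) = xs ! i)"

definition burling_tree ::
  "'a set \<Rightarrow> 'a \<Rightarrow> ('a \<Rightarrow> 'a) \<Rightarrow> ('a \<Rightarrow> 'a) \<Rightarrow> ('a \<Rightarrow> 'a set) \<Rightarrow> bool" where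
  "burling_tree T r p l c \<longleftrightarrow> rooted_tree T r p
     \<and> (\<forall>v\<in>T. children T r p v \<noteq> {} \<longrightarrow> l v \<in> children T r p v)
     \<and> c r = {}
     \<and> (\<forall>v\<in>T - {r}. v = l (p v) \<longrightarrow> c v = {})
     \<and> (\<forall>v\<in>T - {r}. v \<noteq> l (p v) \<longrightarrow>
           (\<exists>xs. is_branch T r p xs \<and> (xs \<noteq> [] \<longrightarrow> hd xs = l (p v)) \<and> c v = set xs))"

definition fully_derived_arcs :: "'a set \<Rightarrow> ('a \<Rightarrow> 'a set) \<Rightarrow> ('a \<times> 'a) set" where
  "fully_derived_arcs T c = {(u, v). u \<in> T \<and> v \<in> T \<and> v \<in> c u}"

(* (V, A) is derived from a Burling tree: isomorphic (via f) to an induced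
   subgraph of the fully derived graph.  Tree vertices are taken to be naturals. *)
definition derived_from ::
  "'a set \<Rightarrow> ('a \<times> 'a) set \<Rightarrow> nat set \<Rightarrow> (nat \<Rightarrow> nat set) \<Rightarrow> ('a \<Rightarrow> nat) \<Rightarrow> bool" where
  "derived_from V A T c f \<longleftrightarrow> A \<subseteq> V \<times> V \<and> inj_on f V \<and> f ` V \<subseteq> T
     \<and> (\<forall>u\<in>V. \<forall>v\<in>V. (u, v) \<in> A \<longleftrightarrow> (f u, f v) \<in> fully_derived_arcs T c)"

definition oriented_burling_graph :: "'a set \<Rightarrow> ('a \<times> 'a) set \<Rightarrow> bool" where
  "oriented_burling_graph V A \<longleftrightarrow> oriented_graph V A \<and>
     (\<exists>(T::nat set) r p l c f. burling_tree T r p l c \<and> derived_from V A T c f)"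

definition directed_cycle :: "'a set \<Rightarrow> ('a \<times> 'a) set \<Rightarrow> 'a list \<Rightarrow> bool" where
  "directed_cycle V A xs \<longleftrightarrow> xs \<noteq> [] \<and> distinct xs \<and> set xs \<subseteq> V
     \<and> (\<forall>i < length xs. (xs ! i, xs ! (Suc i mod length xs)) \<in> A)"

end

theory Submission
  imports Defs
begin

text \<open>Depth in the tree never decreases along an arc \<open>uv\<close>: \<open>c u\<close> is a branch starting
  at the last-born sibling of \<open>u\<close>. It stays the same only when \<open>v\<close> is that last-born, and
  last-borns have no out-arcs. So along a directed cycle, where every vertex has an out-arc,
  depth strictly increases at every step, which is impossible.\<close>

definition tree_depth :: "'a \<Rightarrow> ('a \<Rightarrow> 'a) \<Rightarrow> 'a \<Rightarrow> nat" where
  "tree_depth r p v = (LEAST n. (p ^^ n) v = r)"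

lemma tree_depth_parent:
  assumes "rooted_tree T r p" and "v \<in> T" and "v \<noteq> r"
  shows "tree_depth r p v = Suc (tree_depth r p (p v))"
proof -
  obtain n where "(p ^^ n) v = r"
    using assms unfolding rooted_tree_def by blast
  then have "tree_depth r p v = Suc (LEAST m. (p ^^ Suc m) v = r)"
    unfolding tree_depth_def using \<open>v \<noteq> r\<close> by (simp add: Least_Suc del: funpow.simps)
  then show ?thesis
    unfolding tree_depth_def by (simp only: funpow_Suc_right o_apply)
qed

lemma branch_depth:
  assumes "rooted_tree T r p" and "is_branch T r p xs" and "i < length xs"
  shows "tree_depth r p (xs ! i) = tree_depth r p (xs ! 0) + i"
  using \<open>i < length xs\<close>
proof (induction i)
  case 0
  then show ?case by simp
next
  case (Suc i)
  have "xs ! Suc i \<in> T" "xs ! Suc i \<noteq> r" "p (xs ! Suc i) = xs ! i"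
    using assms(2) Suc.prems nth_mem unfolding is_branch_def by auto
  then show ?case
    using tree_depth_parent[OF assms(1)] Suc by simp
qed

lemma burling_treeD:
  assumes "burling_tree T r p l c"
  shows "rooted_tree T r p"
    and "\<And>v. v \<in> T \<Longrightarrow> children T r p v \<noteq> {} \<Longrightarrow> l v \<in> children T r p v"
    and "c r = {}"
    and "\<And>v. v \<in> T \<Longrightarrow> v \<noteq> r \<Longrightarrow> v = l (p v) \<Longrightarrow> c v = {}"
    and "\<And>v. v \<in> T \<Longrightarrow> v \<noteq> r \<Longrightarrow> v \<noteq> l (p v) \<Longrightarrow>
           \<exists>xs. is_branch T r p xs \<and> (xs \<noteq> [] \<longrightarrow> hd xs = l (p v)) \<and> c v = set xs"
  using assms unfolding burling_tree_def by simp_all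

lemma burling_tree_tail_not_last_born:
  assumes "burling_tree T r p l c" and "u \<in> T" and "c u \<noteq> {}"
  shows "u \<noteq> r" and "u \<noteq> l (p u)"
  using burling_treeD(3,4)[OF assms(1)] assms(2,3) by blast+

lemma burling_tree_last_born_sibling:
  assumes "burling_tree T r p l c" and "u \<in> T" and "u \<noteq> r"
  shows "l (p u) \<in> T" and "l (p u) \<noteq> r" and "p (l (p u)) = p u"
proof -
  have "p u \<in> T"
    using burling_treeD(1)[OF assms(1)] assms(2,3) unfolding rooted_tree_def by blast
  moreover have "u \<in> children T r p (p u)"
    using assms(2,3) unfolding children_def by simp
  ultimately have "l (p u) \<in> children T r p (p u)"
    using burling_treeD(2)[OF assms(1)] by blast
  then show "l (p u) \<in> T" and "l (p u) \<noteq> r" and "p (l (p u)) = p u"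
    unfolding children_def by auto
qed

lemma burling_arc_head:
  assumes bt: "burling_tree T r p l c" and "u \<in> T" and "v \<in> c u"
  shows "v \<in> T" and "v = l (p u) \<or> tree_depth r p u < tree_depth r p v"
proof -
  have rt: "rooted_tree T r p"
    using burling_treeD(1)[OF bt] .
  have "u \<noteq> r" "u \<noteq> l (p u)"
    using burling_tree_tail_not_last_born[OF bt \<open>u \<in> T\<close>] \<open>v \<in> c u\<close> by auto
  then obtain xs where xs: "is_branch T r p xs" "xs \<noteq> [] \<longrightarrow> hd xs = l (p u)" "c u = set xs"
    using burling_treeD(5)[OF bt \<open>u \<in> T\<close>] by blast
  obtain i where i: "i < length xs" "v = xs ! i"
    using xs(3) \<open>v \<in> c u\<close> by (auto simp: in_set_conv_nth)
  then have head: "xs ! 0 = l (p u)"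
    using xs(2) by (auto simp: hd_conv_nth)
  show "v \<in> T"
    using xs(1) i nth_mem unfolding is_branch_def by blast
  have "tree_depth r p (l (p u)) = tree_depth r p u"
    using burling_tree_last_born_sibling[OF bt \<open>u \<in> T\<close> \<open>u \<noteq> r\<close>]
      tree_depth_parent[OF rt] \<open>u \<in> T\<close> \<open>u \<noteq> r\<close> by metis
  then have "tree_depth r p v = tree_depth r p u + i"
    using branch_depth[OF rt xs(1) i(1)] i(2) head by simp
  then show "v = l (p u) \<or> tree_depth r p u < tree_depth r p v"
    using i head by (cases i) auto
qed

lemma burling_arc_depth_less:
  assumes bt: "burling_tree T r p l c" and "u \<in> T" and "v \<in> c u" and "w \<in> c v"
  shows "tree_depth r p u < tree_depth r p v"
proof (rule ccontr)
  assume "\<not> ?thesis"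
  then have "v = l (p u)"
    using burling_arc_head[OF bt \<open>u \<in> T\<close> \<open>v \<in> c u\<close>] by auto
  moreover have "u \<noteq> r"
    using burling_tree_tail_not_last_born[OF bt \<open>u \<in> T\<close>] \<open>v \<in> c u\<close> by auto
  ultimately have "v = l (p v)"
    using burling_tree_last_born_sibling(3)[OF bt \<open>u \<in> T\<close>] by simp
  moreover have "v \<in> T"
    using burling_arc_head(1)[OF bt \<open>u \<in> T\<close> \<open>v \<in> c u\<close>] .
  ultimately show False
    using burling_tree_tail_not_last_born(2)[OF bt] \<open>w \<in> c v\<close> by blast
qed

lemma derived_from_arc:
  assumes "derived_from V A T c f" and "(u, v) \<in> A"
  shows "f u \<in> T" and "f v \<in> c (f u)"
  using assms unfolding derived_from_def fully_derived_arcs_def by auto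

lemma no_strict_increase_around_cycle:
  fixes g :: "nat \<Rightarrow> 'b::linorder"
  assumes "0 < k" and "\<And>i. i < k \<Longrightarrow> g i < g (Suc i mod k)"
  shows False
proof -
  have "Max (g ` {..<k}) \<in> g ` {..<k}"
    using \<open>0 < k\<close> by (intro Max_in) auto
  then obtain i where "i < k" and "g i = Max (g ` {..<k})"
    by auto
  moreover have "g (Suc i mod k) \<le> Max (g ` {..<k})"
    using \<open>0 < k\<close> by (intro Max_ge) auto
  ultimately show False
    using assms(2) by (metis not_le)
qed

theorem lemma3p2:
  fixes V :: "'a set" and A :: "('a \<times> 'a) set"
  assumes "oriented_burling_graph V A"
  shows "\<not> (\<exists>xs. directed_cycle V A xs)"
proof
  assume "\<exists>xs. directed_cycle V A xs"
  then obtain xs where cycle: "directed_cycle V A xs" ..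
  obtain T :: "nat set" and r p l c f
    where bt: "burling_tree T r p l c" and derived: "derived_from V A T c f"
    using assms unfolding oriented_burling_graph_def by blast
  define k where "k = length xs"
  have "0 < k"
    using cycle unfolding directed_cycle_def k_def by simp
  have arc: "(xs ! i, xs ! (Suc i mod k)) \<in> A" if "i < k" for i
    using cycle that unfolding directed_cycle_def k_def by blast
  have "tree_depth r p (f (xs ! i)) < tree_depth r p (f (xs ! (Suc i mod k)))" if "i < k" for i
  proof -
    have "Suc i mod k < k"
      using \<open>0 < k\<close> by simp
    then show ?thesis
      using burling_arc_depth_less[OF bt] derived_from_arc[OF derived arc] \<open>i < k\<close> by blast
  qed
  with \<open>0 < k\<close> show False
    by (rule no_strict_increase_around_cycle)
qed

end
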